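(* Let $d\in\mathbb N$ and let $(\mathrm{RN}_{n,M,Q})_{n,M,Q\in\mathbb Z}\subseteq\mathbb N_0$ satisfy for all $n,M,Q\in\mathbb N$ that $\mathrm{RN}_{0,M,Q}=0$ and $$\mathrm{RN}_{n,M,Q}\le dM^n+\sum_{l=0}^{n-1}\Big[QM^{n-l}\big(d+\mathrm{RN}_{l,M,Q}+\mathbb 1_{\mathbb N}(l)\,\mathrm{RN}_{l-1,M,Q}\big)\Big].$$ Then for all $N\in\mathbb N$, $\mathrm{RN}_{N,N,N}\le 8dN^{2N}$.
   Context: $\mathbb 1_{\mathbb N}(l)$ equals $1$ if $l\in\mathbb N=\{1,2,\dots\}$ and $0$ otherwise. *)

theory Defs
  imports Main
begin

definition indN :: "int \<Rightarrow> nat" where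
  "indN l = (if l \<ge> 1 then 1 else 0)"

end

theory Submission
  imports Defs "HOL-Analysis.Complex_Transcendental"
begin

text \<open>
  Replacing the inequality by an equality (with \<open>d = 1\<close>) gives an extremal sequence \<open>a\<close>
  majorising \<open>RN / d\<close>. Subtracting \<open>M\<close> times the defining sum for \<open>n\<close> from the one
  for \<open>n + 1\<close> turns it into the two-term recurrence
  \<open>a (n+2) = M (Q+1) a (n+1) + Q M a n + Q M\<close>, from which induction gives
  \<open>a n < (M (Q + 2))^n\<close>; the strict form is what lets the additive term \<open>Q M\<close> be absorbed.
  For \<open>M = Q = n = N\<close> this is \<open>N^N (N + 2)^N \<le> e^2 N^(2N) \<le> 8 N^(2N)\<close>.
\<close>

fun rn_majorant :: "nat \<Rightarrow> nat \<Rightarrow> nat \<Rightarrow> nat" where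
  "rn_majorant M Q 0 = 0"
| "rn_majorant M Q (Suc 0) = M * (Q + 1)"
| "rn_majorant M Q (Suc (Suc n)) =
     M * (Q + 1) * rn_majorant M Q (Suc n) + Q * M * rn_majorant M Q n + Q * M"

text \<open>Below, \<open>l - 1\<close> is truncated: at \<open>l = 0\<close> it picks the value at \<open>0\<close>, which vanishes.\<close>

lemma rn_majorant_sum_eq:
  assumes "n \<ge> 1"
  shows "M ^ n + (\<Sum>l<n. Q * M ^ (n - l) *
           (1 + rn_majorant M Q l + rn_majorant M Q (l - 1))) = rn_majorant M Q n"
  using assms
proof (induction n rule: nat_induct_at_least)
  case base
  then show ?case by simp
next
  case (Suc n)
  let ?a = "rn_majorant M Q" and ?u = "\<lambda>l. 1 + rn_majorant M Q l + rn_majorant M Q (l - 1)"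
  have "(\<Sum>l<n. Q * M ^ (Suc n - l) * ?u l) = M * (\<Sum>l<n. Q * M ^ (n - l) * ?u l)"
    unfolding sum_distrib_left by (rule sum.cong) (simp_all add: Suc_diff_le less_imp_le algebra_simps)
  then have split: "(\<Sum>l<Suc n. Q * M ^ (Suc n - l) * ?u l)
      = M * (\<Sum>l<n. Q * M ^ (n - l) * ?u l) + Q * M * ?u n"
    by simp
  obtain k where k: "n = Suc k" using Suc.hyps by (cases n) auto
  have "M ^ Suc n + (\<Sum>l<Suc n. Q * M ^ (Suc n - l) * ?u l)
      = M * (M ^ n + (\<Sum>l<n. Q * M ^ (n - l) * ?u l)) + Q * M * ?u n"
    using split by (simp add: algebra_simps)
  also have "\<dots> = M * ?a n + Q * M * ?u n" using Suc.IH by simp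
  also have "\<dots> = ?a (Suc n)" using k by (simp add: algebra_simps)
  finally show ?case .
qed

lemma le_rn_majorant:
  fixes r :: "nat \<Rightarrow> nat"
  assumes r0: "r 0 = 0"
    and rec: "\<And>n. n \<ge> 1 \<Longrightarrow>
      r n \<le> d * M ^ n + (\<Sum>l<n. Q * M ^ (n - l) * (d + r l + r (l - 1)))"
  shows "r n \<le> d * rn_majorant M Q n"
proof (induction n rule: less_induct)
  case (less n)
  show ?case
  proof (cases "n = 0")
    case True
    then show ?thesis using r0 by simp
  next
    case False
    then have n: "n \<ge> 1" by simp
    have term_le: "d + r l + r (l - 1) \<le> d * (1 + rn_majorant M Q l + rn_majorant M Q (l - 1))"
      if "l < n" for l
    proof -
      have "l - 1 < n" using that by linarith
      then have "r l \<le> d * rn_majorant M Q l" "r (l - 1) \<le> d * rn_majorant M Q (l - 1)"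
        using less.IH that by auto
      then show ?thesis by (simp add: algebra_simps)
    qed
    have "r n \<le> d * M ^ n + (\<Sum>l<n. Q * M ^ (n - l) * (d + r l + r (l - 1)))"
      using rec[OF n] .
    also have "\<dots> \<le> d * M ^ n + (\<Sum>l<n. Q * M ^ (n - l) *
                 (d * (1 + rn_majorant M Q l + rn_majorant M Q (l - 1))))"
      using term_le by (intro add_left_mono sum_mono mult_le_mono2) auto
    also have "\<dots> = d * (M ^ n + (\<Sum>l<n. Q * M ^ (n - l) *
                 (1 + rn_majorant M Q l + rn_majorant M Q (l - 1))))"
      by (simp add: algebra_simps sum_distrib_left)
    also have "\<dots> = d * rn_majorant M Q n" using rn_majorant_sum_eq[OF n] by simp
    finally show ?thesis .
  qed
qed

lemma rn_majorant_less_power: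
  assumes "M \<ge> 1"
  shows "rn_majorant M Q n < (M * (Q + 2)) ^ n"
  using assms
proof (induction M Q n rule: rn_majorant.induct)
  case (1 M Q)
  then show ?case by simp
next
  case (2 M Q)
  then show ?case by simp
next
  case (3 M Q n)
  let ?a = "rn_majorant M Q" and ?x = "M * (Q + 2)"
  have "M * (Q + 1) * (?a (Suc n) + 1) \<le> M * (Q + 1) * ?x ^ Suc n"
    using "3.IH"(1)[OF "3.prems"] by (intro mult_le_mono2) simp
  moreover have "Q * M * (?a n + 1) \<le> Q * M * ?x ^ n"
    using "3.IH"(2)[OF "3.prems"] by (intro mult_le_mono2) simp
  moreover have "Q * M * ?x ^ n \<le> M * ?x ^ Suc n"
  proof -
    have "Q \<le> ?x" using mult_le_mono1[OF "3.prems", of "Q + 2"] by simp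
    then have "M * (Q * ?x ^ n) \<le> M * (?x * ?x ^ n)" by (intro mult_le_mono2 mult_le_mono1)
    then show ?thesis by (simp only: power_Suc mult.left_commute mult.commute)
  qed
  moreover have "1 \<le> M * (Q + 1)" using "3.prems" by simp
  ultimately show ?case by (simp add: algebra_simps)
qed

lemma exp_2_le_8: "exp (2::real) \<le> 8"
proof -
  have "exp (2::real) = exp 1 * exp 1" by (simp flip: exp_add)
  also have "\<dots> \<le> (272/100) * (272/100)"
    using e_less_272 by (intro mult_mono) auto
  finally show ?thesis by simp
qed

lemma add_2_power_self_le:
  assumes "N \<ge> (1::nat)"
  shows "(N + 2) ^ N \<le> 8 * N ^ N"
proof -
  have N: "real N > 0" using assms by simp
  have "real ((N + 2) ^ N) = real N ^ N * (1 + 2 / real N) ^ N"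
    using N by (simp add: power_mult_distrib[symmetric] field_simps)
  also have "\<dots> \<le> real N ^ N * exp 2"
    using exp_ge_one_plus_x_over_n_power_n[of N 2] N by (intro mult_left_mono) auto
  also have "\<dots> \<le> real N ^ N * 8"
    using exp_2_le_8 by (intro mult_left_mono) auto
  finally have "real ((N + 2) ^ N) \<le> real (8 * N ^ N)" by simp
  then show ?thesis by (simp only: of_nat_le_iff)
qed

theorem lemma3p15:
  fixes d :: nat and RN :: "int \<Rightarrow> int \<Rightarrow> int \<Rightarrow> nat"
  assumes "d \<ge> 1"
    and "\<And>n M Q. n \<ge> 1 \<Longrightarrow> M \<ge> 1 \<Longrightarrow> Q \<ge> 1 \<Longrightarrow>
           RN 0 (int M) (int Q) = 0 \<and>
           RN (int n) (int M) (int Q) \<le> d * M ^ n +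
             (\<Sum>l = 0..n - 1. Q * M ^ (n - l) *
                (d + RN (int l) (int M) (int Q) + indN (int l) * RN (int l - 1) (int M) (int Q)))"
  shows "\<And>N. N \<ge> 1 \<Longrightarrow> RN (int N) (int N) (int N) \<le> 8 * d * N ^ (2 * N)"
proof -
  fix N :: nat
  assume N: "N \<ge> 1"
  define r where "r n = RN (int n) (int N) (int N)" for n
  have r0: "r 0 = 0" using assms(2)[of 1 N N] N by (simp add: r_def)
  have shifted: "indN (int l) * RN (int l - 1) (int N) (int N) = r (l - 1)" for l
    using r0 by (cases l) (simp_all add: indN_def r_def)
  have rec: "r n \<le> d * N ^ n + (\<Sum>l<n. N * N ^ (n - l) * (d + r l + r (l - 1)))"
    if "n \<ge> 1" for n
    using assms(2)[OF that N N] that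
    by (simp add: shifted r_def atLeast0AtMost lessThan_Suc_atMost[symmetric])
  have "r N \<le> d * rn_majorant N N N" using le_rn_majorant[of r, OF r0 rec] .
  also have "\<dots> \<le> d * (N ^ N * (N + 2) ^ N)"
    using rn_majorant_less_power[OF N, of N N]
    by (intro mult_le_mono2) (simp only: power_mult_distrib less_imp_le)
  also have "\<dots> \<le> d * (N ^ N * (8 * N ^ N))"
    using add_2_power_self_le[OF N] by simp
  also have "\<dots> = 8 * d * N ^ (2 * N)" by (simp add: power_mult power2_eq_square mult_ac)
  finally show "RN (int N) (int N) (int N) \<le> 8 * d * N ^ (2 * N)" by (simp add: r_def)
qed

end
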